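(* Let $\mathcal{V},\mathcal{U}$ be finite additive groups, $\mathcal{X},\mathcal{Y}$ nonempty sets, $n,l,m\ge1$. Let $V^n$ be a random variable on $\mathcal{V}^n$ with distribution $P_{V^n}$ (the source), and let $W^m(\cdot|\cdot)$ be a channel, i.e. for each $\mathbf{x}\in\mathcal{X}^m$, $W^m(\cdot|\mathbf{x})$ is a probability mass function on $\mathcal{Y}^m$. Let $F_n:\mathcal{V}^n\to\mathcal{U}^l$ be a random linear code and $q_n:\mathcal{V}^n\times\mathcal{U}^l\to\mathcal{X}^m$ a map, and define the random encoder $$\Phi_n(\mathbf{v})=q_n\big(\mathbf{v},\ \Sigma_l(F_n(\Sigma_n(\mathbf{v})))+\bar U^l\big),$$ with $\Sigma_n,\Sigma_l$ uniformly distributed random coordinate permutations of $\mathcal{V}^n$, $\mathcal{U}^l$, $\bar U^l$ uniform on $\mathcal{U}^l$, and $F_n,\Sigma_n,\Sigma_l,\bar U^l,V^n$ and the channel noise mutually independent. Let $\epsilon_n$ be the error probability $\Pr\{V^n\neq\psi_n(Y)\}$ averaged over the random encoder, where for each realization $\varphi_n$ of $\Phi_n$ the decoder $\psi_n:\mathcal{Y}^m\to\mathcal{V}^n$ is an optimal (error-probability-minimizing) decoder and $Y$ is the channel output for input $\varphi_n(V^n)$. Let $P_{X^m|V^n}(\mathbf{x}|\mathbf{v})=|q_n^{-1}(\mathbf{v},\mathbf{x})|/|\mathcal{U}|^l$ with $q_n^{-1}(\mathbf{v},\mathbf{x})=\{\mathbf{u}\in\mathcal{U}^l:q_n(\mathbf{v},\mathbf{u})=\mathbf{x}\}$,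 and let $(V^n,X^m,Y^m)$ have joint distribution $P_{V^n}(\mathbf{v})P_{X^m|V^n}(\mathbf{x}|\mathbf{v})W^m(\mathbf{y}|\mathbf{x})$, with $P_{Y^m}$ the marginal of $Y^m$. Then for every $\gamma>0$, $$\epsilon_n\le\Pr\Big\{\frac1n\ln\frac{W^m(Y^m|X^m)}{P_{Y^m}(Y^m)}\le\frac1n\ln\frac{1}{P_{V^n}(V^n)}+\frac1n\ln\beta'(F_n,q_n)(V^n,X^m)+\gamma\Big\}+e^{-n\gamma},$$ where $$\beta'(F_n,q_n)(\mathbf{v},\mathbf{x})=\max_{P\in\mathcal{P}_n(\mathcal{V})\setminus\{P_{0^n}\},\ \mathbf{u}_1\in\mathcal{U}^l}\ \sum_{\mathbf{u}_2\in q_n^{-1}(\mathbf{v},\mathbf{x})}\frac{\alpha(F_n)(P,P_{\mathbf{u}_2-\mathbf{u}_1})}{|q_n^{-1}(\mathbf{v},\mathbf{x})|}.$$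
   Context: A random linear code $F:\mathcal{V}^n\to\mathcal{U}^l$ is a random variable taking values in the group homomorphisms $\mathcal{V}^n\to\mathcal{U}^l$. The type $P_{\mathbf{x}}$ of a sequence $\mathbf{x}$ of length $n$ over a finite alphabet $\mathcal{A}$ is $P_{\mathbf{x}}(a)=N(a|\mathbf{x})/n$, $N(a|\mathbf{x})$ the number of occurrences of $a$; $\mathcal{P}_n(\mathcal{A})$ is the set of types of sequences in $\mathcal{A}^n$; $P_{0^n}$ is the type of the all-zero sequence. For a map $f:\mathcal{V}^n\to\mathcal{U}^l$, $S(f)(P,Q)=|\{\mathbf{v}: P_{\mathbf{v}}=P,\ P_{f(\mathbf{v})}=Q\}|/|\mathcal{V}|^n$; for a random linear code $F$, $P\in\mathcal{P}_n(\mathcal{V})$, $Q\in\mathcal{P}_l(\mathcal{U})$, $$\alpha(F)(P,Q)=\frac{E[S(F)(P,Q)]}{\binom{n}{nP}\binom{l}{lQ}|\mathcal{V}|^{-n}|\mathcal{U}|^{-l}},\quad \binom{n}{nP}=\frac{n!}{\prod_a (nP(a))!},\ \binom{l}{lQ}=\frac{l!}{\prod_b (lQ(b))!}.$$ Logarithms are natural, with $\ln 0=-\infty$. *)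

theory Defs
  imports "HOL-Probability.Probability" "HOL-Combinatorics.Permutations"
begin

definition seqs :: "nat \<Rightarrow> 'a list set" where
  "seqs n = {xs. length xs = n}"

definition vadd :: "'a::ab_group_add list \<Rightarrow> 'a list \<Rightarrow> 'a list" where
  "vadd xs ys = map2 (+) xs ys"

definition vsub :: "'a::ab_group_add list \<Rightarrow> 'a list \<Rightarrow> 'a list" where
  "vsub xs ys = map2 (-) xs ys"

text \<open>Group homomorphisms from V^n to U^l (behaviour on other lists irrelevant).\<close>
definition is_linear_map :: "nat \<Rightarrow> nat \<Rightarrow> ('v::ab_group_add list \<Rightarrow> 'u::ab_group_add list) \<Rightarrow> bool" where
  "is_linear_map n l f \<longleftrightarrow> (\<forall>a\<in>seqs n. f a \<in> seqs l) \<and>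
     (\<forall>a\<in>seqs n. \<forall>b\<in>seqs n. f (vadd a b) = vadd (f a) (f b))"

definition random_linear_code :: "nat \<Rightarrow> nat \<Rightarrow> ('v::ab_group_add list \<Rightarrow> 'u::ab_group_add list) pmf \<Rightarrow> bool" where
  "random_linear_code n l F \<longleftrightarrow> (\<forall>f\<in>set_pmf F. is_linear_map n l f)"

definition type_of :: "'a list \<Rightarrow> 'a \<Rightarrow> real" where
  "type_of xs = (\<lambda>a. real (count_list xs a) / real (length xs))"

definition types :: "nat \<Rightarrow> ('a \<Rightarrow> real) set" where
  "types n = type_of ` seqs n"

definition multinom :: "nat \<Rightarrow> ('a::finite \<Rightarrow> real) \<Rightarrow> real" where
  "multinom n P = fact n / (\<Prod>a\<in>UNIV. fact (nat \<lfloor>real n * P a\<rfloor>))"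

definition S_count :: "nat \<Rightarrow> ('v::finite list \<Rightarrow> 'u::finite list) \<Rightarrow> ('v \<Rightarrow> real) \<Rightarrow> ('u \<Rightarrow> real) \<Rightarrow> real" where
  "S_count n f P Q = real (card {v\<in>seqs n. type_of v = P \<and> type_of (f v) = Q}) / real (CARD('v)) ^ n"

definition alpha :: "nat \<Rightarrow> nat \<Rightarrow> ('v::finite list \<Rightarrow> 'u::finite list) pmf \<Rightarrow> ('v \<Rightarrow> real) \<Rightarrow> ('u \<Rightarrow> real) \<Rightarrow> real" where
  "alpha n l F P Q = measure_pmf.expectation F (\<lambda>f. S_count n f P Q) /
     (multinom n P * multinom l Q * real (CARD('v)) powi (- int n) * real (CARD('u)) powi (- int l))"

definition qinv :: "nat \<Rightarrow> ('v list \<Rightarrow> 'u list \<Rightarrow> 'x list) \<Rightarrow> 'v list \<Rightarrow> 'x list \<Rightarrow> 'u list set" where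
  "qinv l q v x = {u\<in>seqs l. q v u = x}"

definition beta' :: "nat \<Rightarrow> nat \<Rightarrow> ('v::{finite,ab_group_add} list \<Rightarrow> 'u::{finite,ab_group_add} list) pmf
     \<Rightarrow> ('v list \<Rightarrow> 'u list \<Rightarrow> 'x list) \<Rightarrow> 'v list \<Rightarrow> 'x list \<Rightarrow> real" where
  "beta' n l F q v x = Max ((\<lambda>(P, u1). \<Sum>u2\<in>qinv l q v x.
        alpha n l F P (type_of (vsub u2 u1)) / real (card (qinv l q v x)))
     ` ((types n - {type_of (replicate n (0::'v))}) \<times> seqs l))"

definition rand_perm :: "nat \<Rightarrow> (nat \<Rightarrow> nat) pmf" where
  "rand_perm n = pmf_of_set {\<sigma>. \<sigma> permutes {..<n}}"

definition rand_encoder :: "nat \<Rightarrow> nat \<Rightarrow> ('v list \<Rightarrow> 'u::{finite,ab_group_add} list) pmf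
     \<Rightarrow> ('v list \<Rightarrow> 'u list \<Rightarrow> 'x list) \<Rightarrow> ('v list \<Rightarrow> 'x list) pmf" where
  "rand_encoder n l F q =
     do { f \<leftarrow> F; s \<leftarrow> rand_perm n; t \<leftarrow> rand_perm l; ub \<leftarrow> pmf_of_set (seqs l);
          return_pmf (\<lambda>v. q v (vadd (permute_list t (f (permute_list s v))) ub)) }"

definition err_prob :: "'v list pmf \<Rightarrow> ('x list \<Rightarrow> 'y list pmf) \<Rightarrow> ('v list \<Rightarrow> 'x list)
     \<Rightarrow> ('y list \<Rightarrow> 'v list) \<Rightarrow> real" where
  "err_prob PV W phi psi =
     measure_pmf.prob (do { v \<leftarrow> PV; y \<leftarrow> W (phi v); return_pmf (v, y) }) {(v, y). v \<noteq> psi y}"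

definition opt_err :: "'v list pmf \<Rightarrow> ('x list \<Rightarrow> 'y list pmf) \<Rightarrow> ('v list \<Rightarrow> 'x list) \<Rightarrow> real" where
  "opt_err PV W phi = (INF psi. err_prob PV W phi psi)"

definition avg_err :: "nat \<Rightarrow> nat \<Rightarrow> 'v list pmf \<Rightarrow> ('x list \<Rightarrow> 'y list pmf)
     \<Rightarrow> ('v list \<Rightarrow> 'u::{finite,ab_group_add} list) pmf \<Rightarrow> ('v list \<Rightarrow> 'u list \<Rightarrow> 'x list) \<Rightarrow> real" where
  "avg_err n l PV W F q = measure_pmf.expectation (rand_encoder n l F q) (opt_err PV W)"

text \<open>Joint distribution P_V(v) P_{X|V}(x|v) W(y|x), with P_{X|V}(x|v) = |q^{-1}(v,x)|/|U|^l
  realised as x = q(v,u) for u uniform on U^l.\<close>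
definition joint_VXY :: "nat \<Rightarrow> 'v list pmf \<Rightarrow> ('x list \<Rightarrow> 'y list pmf)
     \<Rightarrow> ('v list \<Rightarrow> 'u::finite list \<Rightarrow> 'x list) \<Rightarrow> ('v list \<times> 'x list \<times> 'y list) pmf" where
  "joint_VXY l PV W q =
     do { v \<leftarrow> PV; u \<leftarrow> pmf_of_set (seqs l); y \<leftarrow> W (q v u); return_pmf (v, q v u, y) }"

definition eln :: "real \<Rightarrow> ereal" where
  "eln x = (if x > 0 then ereal (ln x) else - \<infinity>)"

end

theory Submission
  imports Defs "HOL-Combinatorics.Multiset_Permutations"
begin

text \<open>
  The optimal decoder does at least as well as the maximum a posteriori decoder, which errs only
  if some other message v' explains the channel output at least as well as the true message v.
  The uniform dither makes the transmitted codeword u uniform and independent of the code, so the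
  averaged error is bounded by the probability of this ambiguity under the joint law of (V, U, Y)
  and an independent copy a of the randomly permuted code. By linearity, v' is confused with v
  through a codeword u' iff a (v - v') = u - u'; averaging over the random coordinate
  permutations gives this event the probability alpha(P_{v-v'}, P_{u-u'}) / |U|^l. A union bound
  over (v', u'), averaged over the fibre q^{-1}(v, x) on which u is uniform given (v, x, y),
  bounds the conditional error by beta'(v, x) P_Y(y) / (P_V(v) W(y|x)), which is less than
  exp(-n gamma) outside the threshold event.
\<close>

lemma seqs_iff [simp]: "xs \<in> seqs k \<longleftrightarrow> length xs = k"
  by (simp add: seqs_def)

lemma finite_seqs [simp]: "finite (seqs k :: 'a::finite list set)"
  using finite_lists_length_eq[of "UNIV :: 'a set" k] by (simp add: seqs_def)

lemma card_seqs: "card (seqs k :: 'a::finite list set) = CARD('a) ^ k"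
  using card_lists_length_eq[of "UNIV :: 'a set" k] by (simp add: seqs_def)

lemma seqs_nonempty [simp]: "seqs k \<noteq> {}"
  by (metis empty_iff length_replicate seqs_iff)

lemma length_vadd [simp]: "length (vadd xs ys) = min (length xs) (length ys)"
  by (simp add: vadd_def)

lemma length_vsub [simp]: "length (vsub xs ys) = min (length xs) (length ys)"
  by (simp add: vsub_def)

lemma nth_vadd [simp]: "i < length xs \<Longrightarrow> i < length ys \<Longrightarrow> vadd xs ys ! i = xs ! i + ys ! i"
  by (simp add: vadd_def)

lemma nth_vsub [simp]: "i < length xs \<Longrightarrow> i < length ys \<Longrightarrow> vsub xs ys ! i = xs ! i - ys ! i"
  by (simp add: vsub_def)

lemma vsub_vadd_cancel_left: "length xs = length ys \<Longrightarrow> vsub (vadd xs ys) xs = ys"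
  by (rule nth_equalityI) auto

lemma vadd_vsub_cancel_left: "length xs = length ys \<Longrightarrow> vadd xs (vsub ys xs) = ys"
  by (rule nth_equalityI) auto

lemma vsub_vadd_vsub:
  "length xs = length zs \<Longrightarrow> length ys = length zs \<Longrightarrow> vsub zs (vadd ys (vsub zs xs)) = vsub xs ys"
  by (rule nth_equalityI) (auto simp: algebra_simps)

lemma vsub_eq_replicate_0_iff:
  "length xs = length ys \<Longrightarrow> vsub xs ys = replicate (length xs) 0 \<longleftrightarrow> xs = ys"
  by (auto simp: list_eq_iff_nth_eq)

lemma permute_list_vadd:
  assumes "\<sigma> permutes {..<length xs}" "length ys = length xs"
  shows "permute_list \<sigma> (vadd xs ys) = vadd (permute_list \<sigma> xs) (permute_list \<sigma> ys)"
proof -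
  have "\<sigma> permutes {..<length (zip xs ys)}"
    using assms by simp
  then show ?thesis
    using assms by (simp add: vadd_def permute_list_map permute_list_zip)
qed

lemma linear_map_vsub:
  assumes f: "is_linear_map n l f" and "xs \<in> seqs n" "ys \<in> seqs n"
  shows "f (vsub xs ys) = vsub (f xs) (f ys)"
proof -
  have "vsub xs ys \<in> seqs n" "vadd ys (vsub xs ys) = xs"
    using assms by (simp_all add: vadd_vsub_cancel_left)
  then have "f xs = vadd (f ys) (f (vsub xs ys))"
    using f \<open>ys \<in> seqs n\<close> unfolding is_linear_map_def by metis
  moreover have "length (f (vsub xs ys)) = length (f ys)"
    using f \<open>vsub xs ys \<in> seqs n\<close> \<open>ys \<in> seqs n\<close> unfolding is_linear_map_def by simp
  ultimately show ?thesis
    by (simp add: vsub_vadd_cancel_left)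
qed

lemma type_of_eq_iff_mset:
  "length xs = length ys \<Longrightarrow> type_of xs = type_of ys \<longleftrightarrow> mset xs = mset ys"
  by (cases "xs = []") (auto simp: type_of_def fun_eq_iff multiset_eq_iff count_mset)

lemma multinom_type_of:
  "multinom (length xs) (type_of (xs :: 'a::finite list)) = card (permutations_of_multiset (mset xs))"
proof -
  have count: "nat \<lfloor>real (length xs) * type_of xs a\<rfloor> = count (mset xs) a" for a
    by (cases "xs = []") (simp_all add: type_of_def count_mset)
  have "(\<Prod>a\<in>UNIV. fact (count (mset xs) a) :: real) = (\<Prod>a\<in>set_mset (mset xs). fact (count (mset xs) a))"
    by (rule prod.mono_neutral_right) (auto simp: count_mset)
  moreover have "real (card (permutations_of_multiset (mset xs))) *
      (\<Prod>a\<in>set_mset (mset xs). fact (count (mset xs) a)) = fact (length xs)"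
    using arg_cong[OF card_permutations_of_multiset_aux[of "mset xs"], of real] by (simp add: of_nat_prod)
  ultimately show ?thesis
    unfolding multinom_def count by (simp add: field_simps)
qed

lemma type_of_vsub_ne_zero:
  assumes "v \<in> seqs n" "v' \<in> seqs n" "v \<noteq> v'"
  shows "type_of (vsub v v') \<noteq> type_of (replicate n 0)"
proof
  assume "type_of (vsub v v') = type_of (replicate n 0)"
  then have "mset (vsub v v') = mset (replicate n 0)"
    using assms by (simp add: type_of_eq_iff_mset)
  then have "set (vsub v v') \<subseteq> {0}"
    by (metis set_mset_mset set_replicate_Suc set_replicate_conv_if subset_refl empty_subsetI)
  then have "vsub v v' = replicate (length v) 0"
    using assms by (intro replicate_eqI) auto
  then show False
    using assms vsub_eq_replicate_0_iff[of v v'] by simp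
qed

lemma integral_bind_pmf:
  fixes f :: "'b \<Rightarrow> real"
  assumes "\<And>x. \<bar>f x\<bar> \<le> B"
  shows "measure_pmf.expectation (bind_pmf M N) f = measure_pmf.expectation M (\<lambda>x. measure_pmf.expectation (N x) f)"
  unfolding measure_pmf_bind
  using assms measurable_measure_pmf[of N]
  by (intro integral_bind[where K = "count_space UNIV" and B = B and B' = 1])
     (auto simp: prob_space.finite_measure prob_space_measure_pmf)

lemma measure_bind_pmf:
  "measure_pmf.prob (bind_pmf M N) X = measure_pmf.expectation M (\<lambda>x. measure_pmf.prob (N x) X)"
  using integral_bind_pmf[of "indicator X" 1 M N] by (simp add: abs_indicator)

lemma integrable_pmf_bounded [intro]:
  fixes f :: "'a \<Rightarrow> real"
  shows "(\<And>x. \<bar>f x\<bar> \<le> B) \<Longrightarrow> integrable (measure_pmf p) f"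
  by (rule measure_pmf.integrable_const_bound[where B = B]) auto

lemma abs_average_le:
  fixes f :: "'a \<Rightarrow> real"
  assumes "\<And>x. x \<in> A \<Longrightarrow> \<bar>f x\<bar> \<le> B" "B \<ge> 0"
  shows "\<bar>sum f A / card A\<bar> \<le> B"
proof (cases "card A = 0")
  case False
  have "\<bar>sum f A\<bar> \<le> card A * B"
    using assms(1) by (intro order_trans[OF sum_abs sum_bounded_above])
  then show ?thesis
    using False by (simp add: divide_le_eq mult.commute)
qed (use assms(2) in simp)

lemma sum_fibre_average:
  assumes "finite S"
  shows "(\<Sum>x\<in>S. (\<Sum>x'\<in>{x'\<in>S. k x' = k x}. f x') / card {x'\<in>S. k x' = k x}) = sum f S"
proof -
  have "(\<Sum>x\<in>S. (\<Sum>x'\<in>{x'\<in>S. k x' = k x}. f x') / card {x'\<in>S. k x' = k x}) =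
      (\<Sum>z\<in>k ` S. \<Sum>x\<in>{x\<in>S. k x = z}. (\<Sum>x'\<in>{x'\<in>S. k x' = k x}. f x') / card {x'\<in>S. k x' = k x})"
    by (rule sum.group[symmetric]) (use assms in auto)
  also have "\<dots> = (\<Sum>z\<in>k ` S. \<Sum>x'\<in>{x'\<in>S. k x' = z}. f x')"
  proof (rule sum.cong[OF refl])
    fix z assume "z \<in> k ` S"
    then have "card {x\<in>S. k x = z} \<noteq> 0"
      using assms by (auto simp: card_eq_0_iff)
    moreover have "(\<Sum>x\<in>{x\<in>S. k x = z}. (\<Sum>x'\<in>{x'\<in>S. k x' = k x}. f x') / card {x'\<in>S. k x' = k x}) =
        (\<Sum>x\<in>{x\<in>S. k x = z}. (\<Sum>x'\<in>{x'\<in>S. k x' = z}. f x') / card {x'\<in>S. k x' = z})"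
      by (rule sum.cong) auto
    ultimately show "(\<Sum>x\<in>{x\<in>S. k x = z}. (\<Sum>x'\<in>{x'\<in>S. k x' = k x}. f x') / card {x'\<in>S. k x' = k x}) =
        (\<Sum>x'\<in>{x'\<in>S. k x' = z}. f x')"
      by simp
  qed
  also have "\<dots> = sum f S"
    by (rule sum.group) (use assms in auto)
  finally show ?thesis .
qed

lemma map_pmf_of_set_equal_fibres:
  assumes "finite A" "A \<noteq> {}" "g ` A = B" "\<And>y. y \<in> B \<Longrightarrow> card {x\<in>A. g x = y} = c"
  shows "map_pmf g (pmf_of_set A) = pmf_of_set B"
proof (rule pmf_eqI)
  fix y
  have B: "finite B" "B \<noteq> {}"
    using assms by auto
  have "card A = (\<Sum>y\<in>B. card {x\<in>A. g x = y})"
    using sum.group[of A B g "\<lambda>_. 1::nat"] assms B by simp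
  also have "\<dots> = c * card B"
    using assms(4) by (simp add: mult.commute)
  finally have cardA: "card A = c * card B" .
  have "A \<inter> g -` {y} = {x\<in>A. g x = y}"
    by auto
  then have "pmf (map_pmf g (pmf_of_set A)) y = card {x\<in>A. g x = y} / card A"
    using assms by (simp add: pmf_map measure_pmf_of_set)
  also have "\<dots> = indicator B y / card B"
  proof (cases "y \<in> B")
    case True
    then obtain x where "x \<in> A" "g x = y"
      using assms(3) by auto
    then have "card {x\<in>A. g x = y} > 0"
      using assms(1) by (auto simp: card_gt_0_iff)
    then have "c > 0"
      using True assms(4) by simp
    then show ?thesis
      using True assms(4) by (simp add: cardA)
  next
    case False
    then have "{x\<in>A. g x = y} = {}"
      using assms(3) by auto
    then have "card {x\<in>A. g x = y} = 0"
      by (simp only: card.empty)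
    then show ?thesis
      using False by simp
  qed
  finally show "pmf (map_pmf g (pmf_of_set A)) y = pmf (pmf_of_set B) y"
    using B by (simp add: pmf_of_set)
qed

lemma card_permute_list_fibre:
  assumes "mset ys = mset xs"
  shows "card {\<sigma>. \<sigma> permutes {..<length xs} \<and> permute_list \<sigma> xs = ys} =
         card {\<sigma>. \<sigma> permutes {..<length xs} \<and> permute_list \<sigma> xs = xs}"
proof -
  obtain \<tau> where \<tau>: "\<tau> permutes {..<length xs}" "permute_list \<tau> xs = ys"
    using mset_eq_permutation[OF assms] by blast
  have inv: "inv \<tau> permutes {..<length xs}"
    using \<tau>(1) by (rule permutes_inv)
  have inv_ys: "permute_list (inv \<tau>) ys = xs"
    using permute_list_compose[OF inv, of \<tau>] \<tau> permutes_inv_o(1)[OF \<tau>(1)] by simp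
  have "bij_betw (\<lambda>\<sigma>. \<sigma> \<circ> inv \<tau>) {\<sigma>. \<sigma> permutes {..<length xs} \<and> permute_list \<sigma> xs = ys}
          {\<sigma>. \<sigma> permutes {..<length xs} \<and> permute_list \<sigma> xs = xs}"
  proof (rule bij_betw_byWitness[where f' = "\<lambda>\<sigma>. \<sigma> \<circ> \<tau>"])
    show "\<forall>\<sigma>\<in>{\<sigma>. \<sigma> permutes {..<length xs} \<and> permute_list \<sigma> xs = ys}. \<sigma> \<circ> inv \<tau> \<circ> \<tau> = \<sigma>"
      using permutes_inv_o(2)[OF \<tau>(1)] by (simp add: comp_assoc)
    show "\<forall>\<sigma>\<in>{\<sigma>. \<sigma> permutes {..<length xs} \<and> permute_list \<sigma> xs = xs}. \<sigma> \<circ> \<tau> \<circ> inv \<tau> = \<sigma>"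
      using permutes_inv_o(1)[OF \<tau>(1)] by (simp add: comp_assoc)
    show "(\<lambda>\<sigma>. \<sigma> \<circ> inv \<tau>) ` {\<sigma>. \<sigma> permutes {..<length xs} \<and> permute_list \<sigma> xs = ys}
        \<subseteq> {\<sigma>. \<sigma> permutes {..<length xs} \<and> permute_list \<sigma> xs = xs}"
    proof
      fix \<sigma>' assume "\<sigma>' \<in> (\<lambda>\<sigma>. \<sigma> \<circ> inv \<tau>) ` {\<sigma>. \<sigma> permutes {..<length xs} \<and> permute_list \<sigma> xs = ys}"
      then obtain \<sigma> where "\<sigma> permutes {..<length xs}" "permute_list \<sigma> xs = ys" "\<sigma>' = \<sigma> \<circ> inv \<tau>"
        by blast
      then show "\<sigma>' \<in> {\<sigma>. \<sigma> permutes {..<length xs} \<and> permute_list \<sigma> xs = xs}"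
        using inv inv_ys permute_list_compose[OF inv, of \<sigma>] by (simp add: permutes_compose)
    qed
    show "(\<lambda>\<sigma>. \<sigma> \<circ> \<tau>) ` {\<sigma>. \<sigma> permutes {..<length xs} \<and> permute_list \<sigma> xs = xs}
        \<subseteq> {\<sigma>. \<sigma> permutes {..<length xs} \<and> permute_list \<sigma> xs = ys}"
      using \<tau> by (auto intro: permutes_compose simp: permute_list_compose[OF \<tau>(1)])
  qed
  then show ?thesis
    by (rule bij_betw_same_card)
qed

lemma map_pmf_permute_list_uniform:
  "map_pmf (\<lambda>\<sigma>. permute_list \<sigma> xs) (pmf_of_set {\<sigma>. \<sigma> permutes {..<length xs}}) =
     pmf_of_set (permutations_of_multiset (mset xs))"
proof (rule map_pmf_of_set_equal_fibres)
  show "(\<lambda>\<sigma>. permute_list \<sigma> xs) ` {\<sigma>. \<sigma> permutes {..<length xs}} = permutations_of_multiset (mset xs)"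
  proof (intro equalityI subsetI)
    fix ys assume "ys \<in> permutations_of_multiset (mset xs)"
    then obtain \<sigma> where "\<sigma> permutes {..<length xs}" "permute_list \<sigma> xs = ys"
      using mset_eq_permutation[of ys xs] by (auto simp: permutations_of_multiset_def)
    then show "ys \<in> (\<lambda>\<sigma>. permute_list \<sigma> xs) ` {\<sigma>. \<sigma> permutes {..<length xs}}"
      by blast
  qed (auto simp: permutations_of_multiset_def)
  show "card {\<sigma> \<in> {\<sigma>. \<sigma> permutes {..<length xs}}. permute_list \<sigma> xs = ys} =
      card {\<sigma>. \<sigma> permutes {..<length xs} \<and> permute_list \<sigma> xs = xs}"
    if "ys \<in> permutations_of_multiset (mset xs)" for ys
    using card_permute_list_fibre[of ys xs] that by (simp add: permutations_of_multiset_def)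
  show "finite {\<sigma>. \<sigma> permutes {..<length xs}}"
    by (simp add: finite_permutations)
  show "{\<sigma>. \<sigma> permutes {..<length xs}} \<noteq> {}"
    using permutes_id by blast
qed

lemma bind_uniform_shift:
  fixes c :: "'a::{finite,ab_group_add} list"
  assumes "c \<in> seqs l"
  shows "pmf_of_set (seqs l) \<bind> (\<lambda>u. G (vadd c u)) = pmf_of_set (seqs l) \<bind> G"
proof -
  have "inj_on (vadd c) (seqs l)"
    using assms by (intro inj_on_inverseI[where g = "\<lambda>u. vsub u c"]) (simp add: vsub_vadd_cancel_left)
  moreover have "vadd c ` seqs l = seqs l"
  proof (intro equalityI subsetI)
    fix u :: "'a list" assume "u \<in> seqs l"
    then have "vadd c (vsub u c) = u" "vsub u c \<in> seqs l"
      using assms by (simp_all add: vadd_vsub_cancel_left)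
    then show "u \<in> vadd c ` seqs l"
      by (metis image_eqI)
  qed (use assms in auto)
  ultimately have "map_pmf (vadd c) (pmf_of_set (seqs l)) = pmf_of_set (seqs l)"
    by (simp add: map_pmf_of_set_inj)
  then show ?thesis
    by (metis bind_map_pmf)
qed

section \<open>The randomly permuted code\<close>

definition permuted_code :: "nat \<Rightarrow> nat \<Rightarrow> ('v list \<Rightarrow> 'u list) pmf \<Rightarrow> ('v list \<Rightarrow> 'u list) pmf" where
  "permuted_code n l F =
     do { f \<leftarrow> F; s \<leftarrow> rand_perm n; t \<leftarrow> rand_perm l;
          return_pmf (\<lambda>v. permute_list t (f (permute_list s v))) }"

lemma set_pmf_rand_perm [simp]: "set_pmf (rand_perm n) = {\<sigma>. \<sigma> permutes {..<n}}"
  unfolding rand_perm_def by (rule set_pmf_of_set) (auto simp: finite_permutations intro: permutes_id)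

lemma rand_encoder_eq:
  "rand_encoder n l F q =
     map_pmf (\<lambda>(a, ub) v. q v (vadd (a v) ub)) (pair_pmf (permuted_code n l F) (pmf_of_set (seqs l)))"
  by (simp add: rand_encoder_def permuted_code_def pair_pmf_def map_bind_pmf bind_assoc_pmf
      bind_return_pmf)

lemma linear_permuted_code:
  assumes "random_linear_code n l F" "a \<in> set_pmf (permuted_code n l F)"
  shows "is_linear_map n l a"
proof -
  obtain f s t where f: "is_linear_map n l f" and st: "s permutes {..<n}" "t permutes {..<l}"
    and a: "a = (\<lambda>v. permute_list t (f (permute_list s v)))"
    using assms unfolding permuted_code_def random_linear_code_def by auto
  have f_seqs: "f (permute_list s x) \<in> seqs l" if "x \<in> seqs n" for x
    using f that unfolding is_linear_map_def by simp
  moreover have "a (vadd x y) = vadd (a x) (a y)" if "x \<in> seqs n" "y \<in> seqs n" for x y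
    using f st that f_seqs unfolding a is_linear_map_def by (simp add: permute_list_vadd)
  ultimately show ?thesis
    unfolding is_linear_map_def a by simp
qed

lemma map_pmf_permuted_map_eval:
  assumes f: "\<And>v. v \<in> seqs n \<Longrightarrow> f v \<in> seqs l" and w: "w \<in> seqs n"
  shows "map_pmf (\<lambda>a. a w) (do { s \<leftarrow> rand_perm n; t \<leftarrow> rand_perm l;
             return_pmf (\<lambda>v. permute_list t (f (permute_list s v))) }) =
         do { w' \<leftarrow> pmf_of_set (permutations_of_multiset (mset w));
              pmf_of_set (permutations_of_multiset (mset (f w'))) }"
proof -
  let ?Perm = "\<lambda>xs. permutations_of_multiset (mset xs)"
  have "map_pmf (\<lambda>a. a w) (do { s \<leftarrow> rand_perm n; t \<leftarrow> rand_perm l;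
             return_pmf (\<lambda>v. permute_list t (f (permute_list s v))) }) =
        do { s \<leftarrow> rand_perm n; map_pmf (\<lambda>t. permute_list t (f (permute_list s w))) (rand_perm l) }"
    by (simp add: map_bind_pmf map_pmf_def[symmetric] pmf.map_comp o_def)
  also have "\<dots> = do { s \<leftarrow> rand_perm n; pmf_of_set (?Perm (f (permute_list s w))) }"
    using f w unfolding rand_perm_def
    by (intro bind_pmf_cong refl) (metis length_permute_list map_pmf_permute_list_uniform seqs_iff)
  also have "\<dots> = do { w' \<leftarrow> map_pmf (\<lambda>s. permute_list s w) (rand_perm n); pmf_of_set (?Perm (f w')) }"
    by (simp add: bind_map_pmf)
  also have "\<dots> = do { w' \<leftarrow> pmf_of_set (?Perm w); pmf_of_set (?Perm (f w')) }"
    using w map_pmf_permute_list_uniform[of w] by (simp add: rand_perm_def)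
  finally show ?thesis .
qed

lemma prob_permuted_map_eq:
  fixes f :: "'v::finite list \<Rightarrow> 'u::finite list"
  assumes f: "\<And>v. v \<in> seqs n \<Longrightarrow> f v \<in> seqs l" and w: "w \<in> seqs n" and z: "z \<in> seqs l"
  shows "measure_pmf.prob (do { s \<leftarrow> rand_perm n; t \<leftarrow> rand_perm l;
             return_pmf (\<lambda>v. permute_list t (f (permute_list s v))) }) {a. a w = z} =
         S_count n f (type_of w) (type_of z) * CARD('v) ^ n / (multinom n (type_of w) * multinom l (type_of z))"
proof -
  let ?Perm = "\<lambda>xs. permutations_of_multiset (mset xs)"
  have fibre: "pmf (pmf_of_set (?Perm (f w'))) z = of_bool (mset (f w') = mset z) / card (?Perm z)" for w'
    by (auto simp: pmf_of_set indicator_def intro: permutations_of_multisetI dest: permutations_of_multisetD)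
  have "{w' \<in> ?Perm w. mset (f w') = mset z} = {v \<in> seqs n. type_of v = type_of w \<and> type_of (f v) = type_of z}"
  proof (intro set_eqI iffI)
    fix v assume "v \<in> {w' \<in> ?Perm w. mset (f w') = mset z}"
    then have "mset v = mset w" "mset (f v) = mset z"
      by (auto simp: permutations_of_multiset_def)
    moreover from this(1) have "length v = n"
      using w by (metis mset_eq_length seqs_iff)
    ultimately show "v \<in> {v \<in> seqs n. type_of v = type_of w \<and> type_of (f v) = type_of z}"
      using f w z by (simp add: type_of_eq_iff_mset)
  qed (use f w z in \<open>auto simp: permutations_of_multiset_def type_of_eq_iff_mset\<close>)
  then have count: "(\<Sum>w'\<in>?Perm w. of_bool (mset (f w') = mset z) :: real) =
      S_count n f (type_of w) (type_of z) * CARD('v) ^ n"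
    by (simp add: S_count_def sum.If_cases Int_def)
  have "measure_pmf.prob (do { s \<leftarrow> rand_perm n; t \<leftarrow> rand_perm l;
             return_pmf (\<lambda>v. permute_list t (f (permute_list s v))) }) {a. a w = z} =
      pmf (map_pmf (\<lambda>a. a w) (do { s \<leftarrow> rand_perm n; t \<leftarrow> rand_perm l;
             return_pmf (\<lambda>v. permute_list t (f (permute_list s v))) })) z"
    by (simp add: pmf_map vimage_def)
  also have "\<dots> = pmf (do { w' \<leftarrow> pmf_of_set (?Perm w); pmf_of_set (?Perm (f w')) }) z"
    using map_pmf_permuted_map_eval[where f = f, OF f w] by simp
  also have "\<dots> = (\<Sum>w'\<in>?Perm w. of_bool (mset (f w') = mset z)) / (card (?Perm w) * card (?Perm z))"
    by (simp add: pmf_bind integral_pmf_of_set fibre sum_divide_distrib[symmetric])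
  also have "\<dots> = S_count n f (type_of w) (type_of z) * CARD('v) ^ n / (multinom n (type_of w) * multinom l (type_of z))"
    using w z multinom_type_of[of w] multinom_type_of[of z] by (simp add: count)
  finally show ?thesis .
qed

lemma prob_permuted_code_eq_alpha:
  fixes F :: "('v::finite list \<Rightarrow> 'u::finite list) pmf"
  assumes F: "\<And>f v. f \<in> set_pmf F \<Longrightarrow> v \<in> seqs n \<Longrightarrow> f v \<in> seqs l"
    and w: "w \<in> seqs n" and z: "z \<in> seqs l"
  shows "measure_pmf.prob (permuted_code n l F) {a. a w = z} = alpha n l F (type_of w) (type_of z) / CARD('u) ^ l"
proof -
  let ?c = "CARD('v) ^ n / (multinom n (type_of w) * multinom l (type_of z))"
  have "measure_pmf.prob (permuted_code n l F) {a. a w = z} =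
      measure_pmf.expectation F (\<lambda>f. S_count n f (type_of w) (type_of z) * ?c)"
    unfolding permuted_code_def measure_bind_pmf[of F]
  proof (intro integral_cong_AE AE_pmfI)
    fix f assume "f \<in> set_pmf F"
    then show "measure_pmf.prob (do { s \<leftarrow> rand_perm n; t \<leftarrow> rand_perm l;
             return_pmf (\<lambda>v. permute_list t (f (permute_list s v))) }) {a. a w = z} =
        S_count n f (type_of w) (type_of z) * ?c"
      using prob_permuted_map_eq[of n f l w z] F w z by simp
  qed simp_all
  also have "\<dots> = alpha n l F (type_of w) (type_of z) / CARD('u) ^ l"
    using w z multinom_type_of[of w] multinom_type_of[of z]
    by (simp add: alpha_def power_int_minus field_simps)
  finally show ?thesis .
qed

section \<open>Reduction to a confusion probability\<close>

lemma opt_err_le_err_prob: "opt_err PV W \<phi> \<le> err_prob PV W \<phi> \<psi>"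
  unfolding opt_err_def by (rule cINF_lower) (auto simp: err_prob_def intro: bdd_belowI[where m = 0])

lemma abs_opt_err_le_1: "\<bar>opt_err PV W \<phi>\<bar> \<le> 1"
proof -
  have "0 \<le> opt_err PV W \<phi>"
    unfolding opt_err_def by (rule cINF_greatest) (auto simp: err_prob_def)
  moreover have "opt_err PV W \<phi> \<le> 1"
    using opt_err_le_err_prob[of PV W \<phi> undefined] unfolding err_prob_def
    by (meson measure_pmf.prob_le_1 order_trans)
  ultimately show ?thesis
    by simp
qed

lemma opt_err_le_prob_ambiguous:
  assumes N: "finite N" "set_pmf PV \<subseteq> N"
  shows "opt_err PV W \<phi> \<le> measure_pmf.prob (do { v \<leftarrow> PV; y \<leftarrow> W (\<phi> v); return_pmf (v, y) })
           {(v, y). \<exists>v'\<in>N - {v}. pmf PV v * pmf (W (\<phi> v)) y \<le> pmf PV v' * pmf (W (\<phi> v')) y}"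
proof -
  define score where "score y v = pmf PV v * pmf (W (\<phi> v)) y" for y v
  have "N \<noteq> {}"
    using N(2) set_pmf_not_empty[of PV] by blast
  have "\<exists>v\<in>N. \<forall>v'\<in>N. score y v' \<le> score y v" for y
  proof -
    have "Max (score y ` N) \<in> score y ` N"
      using N(1) \<open>N \<noteq> {}\<close> by simp
    then obtain v where v: "v \<in> N" "score y v = Max (score y ` N)"
      by auto
    have "\<forall>v'\<in>N. score y v' \<le> score y v"
      using N(1) unfolding v(2) by (auto intro: Max_ge)
    with v(1) show ?thesis
      by blast
  qed
  then obtain \<psi> where \<psi>: "\<And>y. \<psi> y \<in> N" "\<And>y v'. v' \<in> N \<Longrightarrow> score y v' \<le> score y (\<psi> y)"
    by metis
  have "opt_err PV W \<phi> \<le> err_prob PV W \<phi> \<psi>"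
    by (rule opt_err_le_err_prob)
  also have "\<dots> \<le> measure_pmf.prob (do { v \<leftarrow> PV; y \<leftarrow> W (\<phi> v); return_pmf (v, y) })
           {(v, y). \<exists>v'\<in>N - {v}. pmf PV v * pmf (W (\<phi> v)) y \<le> pmf PV v' * pmf (W (\<phi> v')) y}"
    unfolding err_prob_def
  proof (rule measure_pmf.finite_measure_mono_AE[OF AE_pmfI])
    fix vy assume "vy \<in> set_pmf (do { v \<leftarrow> PV; y \<leftarrow> W (\<phi> v); return_pmf (v, y) })"
    then obtain v y where "vy = (v, y)" "v \<in> N"
      using N(2) by auto
    then show "vy \<in> {(v, y). v \<noteq> \<psi> y} \<longrightarrow>
        vy \<in> {(v, y). \<exists>v'\<in>N - {v}. pmf PV v * pmf (W (\<phi> v)) y \<le> pmf PV v' * pmf (W (\<phi> v')) y}"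
      using \<psi>(1)[of y] \<psi>(2)[where y = y] unfolding score_def by force
  qed simp
  finally show ?thesis .
qed

text \<open>\<open>(v, u, y, a)\<close> is ambiguous if, under the dither \<open>vsub u (a v)\<close> that makes \<open>a\<close> encode \<open>v\<close>
  as \<open>u\<close>, some other message explains the output \<open>y\<close> at least as well as \<open>v\<close>.\<close>
definition ambiguous :: "nat \<Rightarrow> 'v list pmf \<Rightarrow> ('x list \<Rightarrow> 'y list pmf) \<Rightarrow> ('v list \<Rightarrow> 'u::ab_group_add list \<Rightarrow> 'x list)
     \<Rightarrow> ('v list \<times> 'u list \<times> 'y list \<times> ('v list \<Rightarrow> 'u list)) set" where
  "ambiguous n PV W q = {(v, u, y, a). \<exists>v'\<in>seqs n - {v}.
     pmf PV v * pmf (W (q v u)) y \<le> pmf PV v' * pmf (W (q v' (vadd (a v') (vsub u (a v))))) y}"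

definition confusion_prob :: "nat \<Rightarrow> nat \<Rightarrow> 'v list pmf \<Rightarrow> ('x list \<Rightarrow> 'y list pmf)
     \<Rightarrow> ('v list \<Rightarrow> 'u::ab_group_add list) pmf \<Rightarrow> ('v list \<Rightarrow> 'u list \<Rightarrow> 'x list)
     \<Rightarrow> 'v list \<Rightarrow> 'u list \<Rightarrow> 'y list \<Rightarrow> real" where
  "confusion_prob n l PV W F q v u y =
     measure_pmf.prob (permuted_code n l F) {a. (v, u, y, a) \<in> ambiguous n PV W q}"

lemma opt_err_dithered_le_ambiguous:
  fixes a :: "'v::finite list \<Rightarrow> 'u::ab_group_add list"
  assumes a: "\<And>v. v \<in> seqs n \<Longrightarrow> a v \<in> seqs l" and ub: "ub \<in> seqs l" and PV: "set_pmf PV \<subseteq> seqs n"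
  shows "opt_err PV W (\<lambda>v. q v (vadd (a v) ub)) \<le> measure_pmf.prob
    (do { v \<leftarrow> PV; y \<leftarrow> W (q v (vadd (a v) ub)); return_pmf (v, vadd (a v) ub, y, a) }) (ambiguous n PV W q)"
proof -
  let ?D = "do { v \<leftarrow> PV; y \<leftarrow> W (q v (vadd (a v) ub)); return_pmf (v, y) }"
  have "opt_err PV W (\<lambda>v. q v (vadd (a v) ub)) \<le> measure_pmf.prob ?D
      {(v, y). \<exists>v'\<in>seqs n - {v}. pmf PV v * pmf (W (q v (vadd (a v) ub))) y \<le>
         pmf PV v' * pmf (W (q v' (vadd (a v') ub))) y}" (is "_ \<le> measure_pmf.prob ?D ?S")
    using PV by (rule opt_err_le_prob_ambiguous[OF finite_seqs])
  also have "\<dots> \<le> measure_pmf.prob ?D ((\<lambda>(v, y). (v, vadd (a v) ub, y, a)) -` ambiguous n PV W q)"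
  proof (rule measure_pmf.finite_measure_mono_AE[OF AE_pmfI])
    fix vy assume "vy \<in> set_pmf ?D"
    then obtain v y where vy: "vy = (v, y)" "v \<in> set_pmf PV"
      by auto
    then have "length (a v) = length ub"
      using a ub PV by auto
    then show "vy \<in> ?S \<longrightarrow> vy \<in> (\<lambda>(v, y). (v, vadd (a v) ub, y, a)) -` ambiguous n PV W q"
      unfolding vy by (simp add: ambiguous_def vsub_vadd_cancel_left)
  qed simp
  also have "\<dots> = measure_pmf.prob
      (do { v \<leftarrow> PV; y \<leftarrow> W (q v (vadd (a v) ub)); return_pmf (v, vadd (a v) ub, y, a) }) (ambiguous n PV W q)"
    by (simp add: measure_map_pmf[symmetric] map_bind_pmf)
  finally show ?thesis .
qed

definition joint_VUY :: "nat \<Rightarrow> 'v list pmf \<Rightarrow> ('x list \<Rightarrow> 'y list pmf)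
     \<Rightarrow> ('v list \<Rightarrow> 'u list \<Rightarrow> 'x list) \<Rightarrow> ('v list \<times> 'u list \<times> 'y list) pmf" where
  "joint_VUY l PV W q =
     do { v \<leftarrow> PV; u \<leftarrow> pmf_of_set (seqs l); y \<leftarrow> W (q v u); return_pmf (v, u, y) }"

lemma joint_VXY_eq_map_joint_VUY:
  "joint_VXY l PV W q = map_pmf (\<lambda>(v, u, y). (v, q v u, y)) (joint_VUY l PV W q)"
  by (simp add: joint_VXY_def joint_VUY_def map_bind_pmf)

lemma bind_permuted_code_dithered:
  fixes F :: "('v::ab_group_add list \<Rightarrow> 'u::{finite,ab_group_add} list) pmf"
  assumes F: "random_linear_code n l F" and PV: "set_pmf PV \<subseteq> seqs n"
  shows "do { (a, ub) \<leftarrow> pair_pmf (permuted_code n l F) (pmf_of_set (seqs l)); v \<leftarrow> PV;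
              y \<leftarrow> W (q v (vadd (a v) ub)); return_pmf (v, vadd (a v) ub, y, a) } =
         do { (v, u, y) \<leftarrow> joint_VUY l PV W q; a \<leftarrow> permuted_code n l F; return_pmf (v, u, y, a) }"
    (is "?lhs = ?rhs")
proof -
  let ?A = "permuted_code n l F" and ?U = "pmf_of_set (seqs l :: 'u list set)"
  let ?G = "\<lambda>v u a. W (q v u) \<bind> (\<lambda>y. return_pmf (v, u, y, a))"
  have "?lhs = ?A \<bind> (\<lambda>a. PV \<bind> (\<lambda>v. ?U \<bind> (\<lambda>ub. ?G v (vadd (a v) ub) a)))"
    by (simp add: pair_pmf_def bind_assoc_pmf bind_return_pmf bind_commute_pmf[of ?U PV])
  also have "\<dots> = ?A \<bind> (\<lambda>a. PV \<bind> (\<lambda>v. ?U \<bind> (\<lambda>u. ?G v u a)))"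
  proof (rule bind_pmf_cong[OF refl], rule bind_pmf_cong[OF refl])
    fix a v assume "a \<in> set_pmf ?A" "v \<in> set_pmf PV"
    then have "a v \<in> seqs l"
      using linear_permuted_code[OF F] PV unfolding is_linear_map_def by blast
    then show "?U \<bind> (\<lambda>ub. ?G v (vadd (a v) ub) a) = ?U \<bind> (\<lambda>u. ?G v u a)"
      by (rule bind_uniform_shift)
  qed
  also have "\<dots> = ?rhs"
    by (simp add: joint_VUY_def bind_assoc_pmf bind_return_pmf bind_commute_pmf[of ?A])
  finally show ?thesis .
qed

lemma avg_err_le_confusion_prob:
  fixes F :: "('v::{finite,ab_group_add} list \<Rightarrow> 'u::{finite,ab_group_add} list) pmf"
  assumes F: "random_linear_code n l F" and PV: "set_pmf PV \<subseteq> seqs n"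
  shows "avg_err n l PV W F q \<le>
    measure_pmf.expectation (joint_VUY l PV W q) (\<lambda>(v, u, y). confusion_prob n l PV W F q v u y)"
proof -
  let ?A = "permuted_code n l F" and ?U = "pmf_of_set (seqs l :: 'u list set)"
  define M where "M = (\<lambda>(a, ub). do { v \<leftarrow> PV; y \<leftarrow> W (q v (vadd (a v) ub));
    return_pmf (v, vadd (a v) ub, y, a) })"
  have "avg_err n l PV W F q =
      measure_pmf.expectation (pair_pmf ?A ?U) (\<lambda>(a, ub). opt_err PV W (\<lambda>v. q v (vadd (a v) ub)))"
    by (simp add: avg_err_def rand_encoder_eq case_prod_unfold)
  also have "\<dots> \<le> measure_pmf.expectation (pair_pmf ?A ?U) (\<lambda>aub. measure_pmf.prob (M aub) (ambiguous n PV W q))"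
  proof (rule integral_mono_AE[OF _ _ AE_pmfI])
    fix aub assume "aub \<in> set_pmf (pair_pmf ?A ?U)"
    then obtain a ub where aub: "aub = (a, ub)" and "a \<in> set_pmf ?A" "ub \<in> seqs l"
      by (cases aub) (auto simp: set_pmf_of_set)
    moreover from this(2) have "\<And>v. v \<in> seqs n \<Longrightarrow> a v \<in> seqs l"
      using linear_permuted_code[OF F] unfolding is_linear_map_def by blast
    then have "opt_err PV W (\<lambda>v. q v (vadd (a v) ub)) \<le> measure_pmf.prob
        (do { v \<leftarrow> PV; y \<leftarrow> W (q v (vadd (a v) ub)); return_pmf (v, vadd (a v) ub, y, a) }) (ambiguous n PV W q)"
      using \<open>ub \<in> seqs l\<close> PV by (rule opt_err_dithered_le_ambiguous)
    ultimately show "(\<lambda>(a, ub). opt_err PV W (\<lambda>v. q v (vadd (a v) ub))) aub \<le>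
        measure_pmf.prob (M aub) (ambiguous n PV W q)"
      by (simp add: M_def)
  qed (auto intro!: integrable_pmf_bounded[where B = 1] simp: case_prod_unfold abs_opt_err_le_1)
  also have "\<dots> = measure_pmf.prob (pair_pmf ?A ?U \<bind> M) (ambiguous n PV W q)"
    by (simp add: measure_bind_pmf)
  also have "pair_pmf ?A ?U \<bind> M =
      do { (v, u, y) \<leftarrow> joint_VUY l PV W q; a \<leftarrow> ?A; return_pmf (v, u, y, a) }"
    unfolding M_def using bind_permuted_code_dithered[OF F PV, of W q] by (simp add: case_prod_unfold)
  also have "measure_pmf.prob \<dots> (ambiguous n PV W q) =
      measure_pmf.expectation (joint_VUY l PV W q) (\<lambda>(v, u, y). confusion_prob n l PV W F q v u y)"
    by (simp add: measure_bind_pmf case_prod_unfold map_pmf_def[symmetric] measure_map_pmf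
        confusion_prob_def vimage_def)
  finally show ?thesis .
qed

section \<open>Union bound over the fibres of the encoder\<close>

lemma ambiguous_imp_maps_difference:
  assumes a: "is_linear_map n l a" and v: "v \<in> seqs n" and u: "u \<in> seqs l"
    and "(v, u, y, a) \<in> ambiguous n PV W q"
  shows "\<exists>v'\<in>seqs n - {v}. \<exists>u'\<in>seqs l.
    pmf PV v * pmf (W (q v u)) y \<le> pmf PV v' * pmf (W (q v' u')) y \<and> a (vsub v v') = vsub u u'"
proof -
  obtain v' where v': "v' \<in> seqs n - {v}"
    "pmf PV v * pmf (W (q v u)) y \<le> pmf PV v' * pmf (W (q v' (vadd (a v') (vsub u (a v))))) y"
    using assms(4) unfolding ambiguous_def by blast
  have "a v \<in> seqs l" "a v' \<in> seqs l"
    using a v v' unfolding is_linear_map_def by auto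
  then have "a (vsub v v') = vsub u (vadd (a v') (vsub u (a v)))"
    using a v v' u by (simp add: linear_map_vsub vsub_vadd_vsub)
  moreover have "vadd (a v') (vsub u (a v)) \<in> seqs l"
    using \<open>a v \<in> seqs l\<close> \<open>a v' \<in> seqs l\<close> u by simp
  ultimately show ?thesis
    using v' by blast
qed

lemma confusion_prob_le_sum_alpha:
  fixes F :: "('v::{finite,ab_group_add} list \<Rightarrow> 'u::{finite,ab_group_add} list) pmf"
  assumes F: "random_linear_code n l F" and v: "v \<in> seqs n" and u: "u \<in> seqs l"
  shows "confusion_prob n l PV W F q v u y \<le> (\<Sum>v'\<in>seqs n - {v}. \<Sum>u'\<in>seqs l.
     of_bool (pmf PV v * pmf (W (q v u)) y \<le> pmf PV v' * pmf (W (q v' u')) y) *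
     alpha n l F (type_of (vsub v v')) (type_of (vsub u u')) / CARD('u) ^ l)"
proof -
  let ?A = "permuted_code n l F"
  let ?c = "\<lambda>v' u'. pmf PV v * pmf (W (q v u)) y \<le> pmf PV v' * pmf (W (q v' u')) y"
  define B where "B = (\<lambda>(v', u'). if ?c v' u' then {a. a (vsub v v') = vsub u u'} else {})"
  have "\<And>f w. f \<in> set_pmf F \<Longrightarrow> w \<in> seqs n \<Longrightarrow> f w \<in> seqs l"
    using F unfolding random_linear_code_def is_linear_map_def by blast
  then have prob_eq: "measure_pmf.prob ?A {a. a w = z} = alpha n l F (type_of w) (type_of z) / CARD('u) ^ l"
    if "w \<in> seqs n" "z \<in> seqs l" for w z
    using that by (rule prob_permuted_code_eq_alpha)
  have cover: "{a. (v, u, y, a) \<in> ambiguous n PV W q} \<inter> set_pmf ?A \<subseteq> \<Union> (B ` ((seqs n - {v}) \<times> seqs l))"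
  proof
    fix a assume "a \<in> {a. (v, u, y, a) \<in> ambiguous n PV W q} \<inter> set_pmf ?A"
    then obtain v' u' where "v' \<in> seqs n - {v}" "u' \<in> seqs l" "?c v' u'" "a (vsub v v') = vsub u u'"
      using ambiguous_imp_maps_difference[OF linear_permuted_code[OF F] v u] by blast
    then show "a \<in> \<Union> (B ` ((seqs n - {v}) \<times> seqs l))"
      unfolding B_def by (intro UN_I[of "(v', u')"]) auto
  qed
  have "confusion_prob n l PV W F q v u y =
      measure_pmf.prob ?A ({a. (v, u, y, a) \<in> ambiguous n PV W q} \<inter> set_pmf ?A)"
    unfolding confusion_prob_def by (rule measure_Int_set_pmf[symmetric])
  also have "\<dots> \<le> measure_pmf.prob ?A (\<Union> (B ` ((seqs n - {v}) \<times> seqs l)))"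
    using cover by (intro measure_pmf.finite_measure_mono) auto
  also have "\<dots> \<le> (\<Sum>p\<in>(seqs n - {v}) \<times> seqs l. measure_pmf.prob ?A (B p))"
    by (intro measure_pmf.finite_measure_subadditive_finite) auto
  also have "\<dots> = (\<Sum>v'\<in>seqs n - {v}. \<Sum>u'\<in>seqs l. measure_pmf.prob ?A (B (v', u')))"
    by (simp add: sum.cartesian_product)
  also have "\<dots> = (\<Sum>v'\<in>seqs n - {v}. \<Sum>u'\<in>seqs l.
     of_bool (?c v' u') * alpha n l F (type_of (vsub v v')) (type_of (vsub u u')) / CARD('u) ^ l)"
    using v u by (intro sum.cong refl) (simp add: B_def prob_eq)
  finally show ?thesis .
qed

lemma sum_alpha_fibre_le_beta':
  fixes F :: "('v::{finite,ab_group_add} list \<Rightarrow> 'u::{finite,ab_group_add} list) pmf"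
  assumes "v \<in> seqs n" "v' \<in> seqs n - {v}" "u' \<in> seqs l"
  shows "(\<Sum>u\<in>qinv l q v x. alpha n l F (type_of (vsub v v')) (type_of (vsub u u'))) \<le>
    card (qinv l q v x) * beta' n l F q v x"
proof -
  have "finite (qinv l q v x)"
    by (auto simp: qinv_def intro: finite_subset[of _ "seqs l"])
  have "(type_of (vsub v v'), u') \<in> (types n - {type_of (replicate n (0::'v))}) \<times> seqs l"
    using assms type_of_vsub_ne_zero[of v n v'] unfolding types_def by auto
  then have "(\<Sum>u\<in>qinv l q v x. alpha n l F (type_of (vsub v v')) (type_of (vsub u u')) / card (qinv l q v x))
      \<le> beta' n l F q v x"
    unfolding beta'_def by (intro Max_ge) (auto simp: types_def)
  moreover have "card (qinv l q v x) > 0" if "qinv l q v x \<noteq> {}"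
    using that \<open>finite (qinv l q v x)\<close> by (simp add: card_gt_0_iff)
  ultimately show ?thesis
    by (cases "qinv l q v x = {}") (simp_all add: sum_divide_distrib[symmetric] pos_divide_le_eq mult.commute)
qed

lemma confusion_fibre_average_le_beta':
  fixes F :: "('v::{finite,ab_group_add} list \<Rightarrow> 'u::{finite,ab_group_add} list) pmf"
  assumes F: "random_linear_code n l F" and v: "v \<in> seqs n" and x: "x \<in> q v ` seqs l"
  shows "(\<Sum>u\<in>qinv l q v x. confusion_prob n l PV W F q v u y) / card (qinv l q v x) \<le>
    beta' n l F q v x * (\<Sum>v'\<in>seqs n - {v}. \<Sum>u'\<in>seqs l.
      of_bool (pmf PV v * pmf (W x) y \<le> pmf PV v' * pmf (W (q v' u')) y)) / CARD('u) ^ l"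
proof -
  let ?Q = "qinv l q v x"
  let ?c = "\<lambda>v' u'. of_bool (pmf PV v * pmf (W x) y \<le> pmf PV v' * pmf (W (q v' u')) y) :: real"
  let ?\<alpha> = "\<lambda>u v' u'. alpha n l F (type_of (vsub v v')) (type_of (vsub u u'))"
  have "finite ?Q" "?Q \<noteq> {}"
    using x by (auto simp: qinv_def intro: finite_subset[of _ "seqs l"])
  then have "card ?Q > 0"
    by (simp add: card_gt_0_iff)
  have "(\<Sum>u\<in>?Q. confusion_prob n l PV W F q v u y) \<le>
      (\<Sum>u\<in>?Q. \<Sum>v'\<in>seqs n - {v}. \<Sum>u'\<in>seqs l. ?c v' u' * ?\<alpha> u v' u' / CARD('u) ^ l)"
  proof (rule sum_mono)
    fix u assume "u \<in> ?Q"
    then have "u \<in> seqs l" "q v u = x"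
      by (auto simp: qinv_def)
    then show "confusion_prob n l PV W F q v u y \<le>
        (\<Sum>v'\<in>seqs n - {v}. \<Sum>u'\<in>seqs l. ?c v' u' * ?\<alpha> u v' u' / CARD('u) ^ l)"
      using confusion_prob_le_sum_alpha[OF F v, of u PV W q y] by simp
  qed
  also have "\<dots> = (\<Sum>v'\<in>seqs n - {v}. \<Sum>u'\<in>seqs l. ?c v' u' * (\<Sum>u\<in>?Q. ?\<alpha> u v' u') / CARD('u) ^ l)"
    by (simp add: sum.swap[of _ ?Q] sum_distrib_left sum_divide_distrib)
  also have "\<dots> \<le> (\<Sum>v'\<in>seqs n - {v}. \<Sum>u'\<in>seqs l. ?c v' u' * (card ?Q * beta' n l F q v x) / CARD('u) ^ l)"
    using v by (intro sum_mono divide_right_mono mult_left_mono sum_alpha_fibre_le_beta') auto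
  also have "\<dots> = card ?Q * beta' n l F q v x / CARD('u) ^ l * (\<Sum>v'\<in>seqs n - {v}. \<Sum>u'\<in>seqs l. ?c v' u')"
    unfolding sum_distrib_left by (intro sum.cong refl) (simp add: mult.commute)
  finally show ?thesis
    using \<open>card ?Q > 0\<close> by (simp add: divide_le_eq mult_ac)
qed

lemma integral_joint_VUY:
  fixes g :: "'v list \<times> 'u::finite list \<times> 'y list \<Rightarrow> real"
  assumes g: "\<And>z. \<bar>g z\<bar> \<le> B"
  shows "measure_pmf.expectation (joint_VUY l PV W q) g = measure_pmf.expectation PV
     (\<lambda>v. (\<Sum>u\<in>seqs l. measure_pmf.expectation (W (q v u)) (\<lambda>y. g (v, u, y))) / card (seqs l :: 'u list set))"
  unfolding joint_VUY_def
  by (simp add: integral_bind_pmf[OF g] integral_pmf_of_set)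

lemma sum_integral_fibre_average:
  fixes g :: "'u::finite list \<Rightarrow> 'y \<Rightarrow> real"
  assumes g: "\<And>u y. \<bar>g u y\<bar> \<le> B"
  shows "(\<Sum>u\<in>seqs l. measure_pmf.expectation (W (q v u))
      (\<lambda>y. (\<Sum>u'\<in>qinv l q v (q v u). g u' y) / card (qinv l q v (q v u)))) =
    (\<Sum>u\<in>seqs l. measure_pmf.expectation (W (q v u)) (g u))"
proof -
  have "measure_pmf.expectation (W (q v u)) (\<lambda>y. \<Sum>u'\<in>qinv l q v (q v u). g u' y) =
      (\<Sum>u'\<in>qinv l q v (q v u). measure_pmf.expectation (W (q v u')) (g u'))" for u
  proof -
    have "measure_pmf.expectation (W (q v u)) (\<lambda>y. \<Sum>u'\<in>qinv l q v (q v u). g u' y) =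
        (\<Sum>u'\<in>qinv l q v (q v u). measure_pmf.expectation (W (q v u)) (g u'))"
      using g by (intro Bochner_Integration.integral_sum integrable_pmf_bounded) blast
    also have "\<dots> = (\<Sum>u'\<in>qinv l q v (q v u). measure_pmf.expectation (W (q v u')) (g u'))"
      by (intro sum.cong) (auto simp: qinv_def)
    finally show ?thesis .
  qed
  then have "measure_pmf.expectation (W (q v u))
      (\<lambda>y. (\<Sum>u'\<in>qinv l q v (q v u). g u' y) / card (qinv l q v (q v u))) =
    (\<Sum>u'\<in>qinv l q v (q v u). measure_pmf.expectation (W (q v u')) (g u')) / card (qinv l q v (q v u))" for u
    by simp
  moreover have "(\<Sum>u\<in>seqs l. (\<Sum>u'\<in>qinv l q v (q v u). measure_pmf.expectation (W (q v u')) (g u')) /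
      card (qinv l q v (q v u))) = (\<Sum>u\<in>seqs l. measure_pmf.expectation (W (q v u)) (g u))"
    unfolding qinv_def by (rule sum_fibre_average) simp
  ultimately show ?thesis
    by (simp only:)
qed

text \<open>Given \<open>(V, X, Y)\<close>, the codeword \<open>U\<close> is uniform on the fibre \<open>qinv l q V X\<close>.\<close>
lemma integral_joint_VUY_eq_fibre_average:
  fixes g :: "'v list \<times> 'u::finite list \<times> 'y list \<Rightarrow> real"
  assumes g: "\<And>z. \<bar>g z\<bar> \<le> B"
  shows "measure_pmf.expectation (joint_VUY l PV W q) g =
    measure_pmf.expectation (joint_VXY l PV W q)
      (\<lambda>(v, x, y). (\<Sum>u\<in>qinv l q v x. g (v, u, y)) / card (qinv l q v x))"
proof -
  have avg: "\<bar>(\<lambda>(v, u, y). (\<Sum>u'\<in>qinv l q v (q v u). g (v, u', y)) / card (qinv l q v (q v u))) z\<bar> \<le> B"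
    for z
    using order_trans[OF abs_ge_zero g] by (cases z) (simp only: prod.case, intro abs_average_le g)
  have fibre: "(\<Sum>u\<in>seqs l. measure_pmf.expectation (W (q v u))
      (\<lambda>y. (\<Sum>u'\<in>qinv l q v (q v u). g (v, u', y)) / card (qinv l q v (q v u)))) =
    (\<Sum>u\<in>seqs l. measure_pmf.expectation (W (q v u)) (\<lambda>y. g (v, u, y)))" for v
    using g by (rule sum_integral_fibre_average)
  have "measure_pmf.expectation (joint_VUY l PV W q) g = measure_pmf.expectation PV
     (\<lambda>v. (\<Sum>u\<in>seqs l. measure_pmf.expectation (W (q v u)) (\<lambda>y. g (v, u, y))) / card (seqs l :: 'u list set))"
    by (rule integral_joint_VUY[OF g])
  also have "\<dots> = measure_pmf.expectation (joint_VUY l PV W q)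
      (\<lambda>(v, u, y). (\<Sum>u'\<in>qinv l q v (q v u). g (v, u', y)) / card (qinv l q v (q v u)))"
    by (simp only: integral_joint_VUY[OF avg] prod.case fibre)
  also have "\<dots> = measure_pmf.expectation (joint_VXY l PV W q)
      (\<lambda>(v, x, y). (\<Sum>u\<in>qinv l q v x. g (v, u, y)) / card (qinv l q v x))"
    by (simp add: joint_VXY_eq_map_joint_VUY case_prod_unfold)
  finally show ?thesis .
qed

section \<open>The threshold event\<close>

lemma pmf_output_joint_VXY:
  fixes q :: "'v::finite list \<Rightarrow> 'u::finite list \<Rightarrow> 'x list"
  assumes PV: "set_pmf PV \<subseteq> seqs n"
  shows "pmf (map_pmf (\<lambda>(v, x, y). y) (joint_VXY l PV W q)) y =
    (\<Sum>v\<in>seqs n. pmf PV v * (\<Sum>u\<in>seqs l. pmf (W (q v u)) y)) / card (seqs l :: 'u list set)"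
proof -
  have "map_pmf (\<lambda>(v, x, y). y) (joint_VXY l PV W q) = PV \<bind> (\<lambda>v. pmf_of_set (seqs l) \<bind> (\<lambda>u. W (q v u)))"
    by (simp add: joint_VXY_def map_bind_pmf bind_return_pmf')
  then have "pmf (map_pmf (\<lambda>(v, x, y). y) (joint_VXY l PV W q)) y =
      measure_pmf.expectation PV (\<lambda>v. (\<Sum>u\<in>seqs l. pmf (W (q v u)) y) / card (seqs l :: 'u list set))"
    by (simp add: pmf_bind integral_pmf_of_set)
  also have "\<dots> = (\<Sum>v\<in>seqs n. (\<Sum>u\<in>seqs l. pmf (W (q v u)) y) / card (seqs l :: 'u list set) * pmf PV v)"
    using PV by (intro integral_measure_pmf_real) auto
  finally show ?thesis
    by (simp add: sum_divide_distrib[symmetric] mult.commute)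
qed

lemma ambiguous_count_le_output_pmf:
  fixes q :: "'v::finite list \<Rightarrow> 'u::finite list \<Rightarrow> 'x list"
  assumes PV: "set_pmf PV \<subseteq> seqs n"
  shows "pmf PV v * pmf (W x) y * (\<Sum>v'\<in>seqs n - {v}. \<Sum>u'\<in>seqs l.
      of_bool (pmf PV v * pmf (W x) y \<le> pmf PV v' * pmf (W (q v' u')) y)) \<le>
    CARD('u) ^ l * pmf (map_pmf (\<lambda>(v, x, y). y) (joint_VXY l PV W q)) y"
proof -
  let ?a = "pmf PV v * pmf (W x) y"
  have "?a * (\<Sum>v'\<in>seqs n - {v}. \<Sum>u'\<in>seqs l. of_bool (?a \<le> pmf PV v' * pmf (W (q v' u')) y)) =
      (\<Sum>v'\<in>seqs n - {v}. \<Sum>u'\<in>seqs l. ?a * of_bool (?a \<le> pmf PV v' * pmf (W (q v' u')) y))"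
    by (simp only: sum_distrib_left)
  also have "\<dots> \<le> (\<Sum>v'\<in>seqs n - {v}. \<Sum>u'\<in>seqs l. pmf PV v' * pmf (W (q v' u')) y)"
    by (intro sum_mono) auto
  also have "\<dots> \<le> (\<Sum>v'\<in>seqs n. \<Sum>u'\<in>seqs l. pmf PV v' * pmf (W (q v' u')) y)"
    by (intro sum_mono2) (auto intro: sum_nonneg)
  also have "\<dots> = CARD('u) ^ l * pmf (map_pmf (\<lambda>(v, x, y). y) (joint_VXY l PV W q)) y"
    using PV by (simp add: pmf_output_joint_VXY card_seqs sum_distrib_left[symmetric])
  finally show ?thesis .
qed

lemma not_threshold_imp_less:
  fixes a P p b \<gamma> :: real and n :: nat
  assumes pos: "a > 0" "p > 0" "P \<ge> 0" "n > 0"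
    and not_le: "\<not> ereal (1 / real n) * eln (a / P) \<le>
      ereal (1 / real n) * eln (1 / p) + ereal (1 / real n) * eln b + ereal \<gamma>"
  shows "b * P < a * p * exp (- real n * \<gamma>)"
proof (cases "b > 0 \<and> P > 0")
  case True
  then have "ln (1 / p) / n + ln b / n + \<gamma> < ln (a / P) / n"
    using pos not_le by (simp add: eln_def)
  then have "(ln (1 / p) + ln b + n * \<gamma>) / n < ln (a / P) / n"
    using pos by (simp add: add_divide_distrib)
  then have "ln (1 / p) + ln b + n * \<gamma> < ln (a / P)"
    using pos by (simp add: divide_less_cancel)
  then have "ln (b * exp (n * \<gamma>) / p) < ln (a / P)"
    using pos True by (simp add: ln_mult ln_div)
  then have "b * exp (n * \<gamma>) / p < a / P"
    using pos True by simp
  then show ?thesis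
    using pos True by (simp add: exp_minus field_simps)
next
  case False
  then have "b * P \<le> 0"
    using pos by (auto simp: mult_nonpos_nonneg)
  then show ?thesis
    using pos by (smt (verit) exp_gt_zero mult_pos_pos)
qed

definition threshold_event :: "nat \<Rightarrow> nat \<Rightarrow> 'v list pmf \<Rightarrow> ('x list \<Rightarrow> 'y list pmf)
     \<Rightarrow> ('v::{finite,ab_group_add} list \<Rightarrow> 'u::{finite,ab_group_add} list) pmf \<Rightarrow> ('v list \<Rightarrow> 'u list \<Rightarrow> 'x list)
     \<Rightarrow> real \<Rightarrow> ('v list \<times> 'x list \<times> 'y list) set" where
  "threshold_event n l PV W F q \<gamma> = {(v, x, y).
     ereal (1 / real n) * eln (pmf (W x) y / pmf (map_pmf (\<lambda>(v, x, y). y) (joint_VXY l PV W q)) y)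
       \<le> ereal (1 / real n) * eln (1 / pmf PV v) + ereal (1 / real n) * eln (beta' n l F q v x) + ereal \<gamma>}"

lemma confusion_fibre_average_less_exp:
  fixes F :: "('v::{finite,ab_group_add} list \<Rightarrow> 'u::{finite,ab_group_add} list) pmf"
    and W :: "'x list \<Rightarrow> 'y list pmf" and q :: "'v list \<Rightarrow> 'u list \<Rightarrow> 'x list"
  assumes F: "random_linear_code n l F" and n: "n \<ge> 1" and PV: "set_pmf PV \<subseteq> seqs n"
    and v: "v \<in> set_pmf PV" and x: "x \<in> q v ` seqs l" and y: "y \<in> set_pmf (W x)"
    and not_le: "(v, x, y) \<notin> threshold_event n l PV W F q \<gamma>"
  shows "(\<Sum>u\<in>qinv l q v x. confusion_prob n l PV W F q v u y) / card (qinv l q v x) < exp (- real n * \<gamma>)"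
proof -
  let ?b = "beta' n l F q v x" and ?PY = "pmf (map_pmf (\<lambda>(v, x, y). y) (joint_VXY l PV W q)) y"
  let ?S = "\<Sum>v'\<in>seqs n - {v}. \<Sum>u'\<in>seqs l.
      of_bool (pmf PV v * pmf (W x) y \<le> pmf PV v' * pmf (W (q v' u')) y) :: real"
  let ?K = "real (CARD('u) ^ l)" and ?e = "exp (- real n * \<gamma>)"
  have pos: "pmf PV v > 0" "pmf (W x) y > 0" "?K > 0"
    using v y by (simp_all add: pmf_positive)
  have "v \<in> seqs n"
    using v PV by auto
  with F have "(\<Sum>u\<in>qinv l q v x. confusion_prob n l PV W F q v u y) / card (qinv l q v x) \<le> ?b * ?S / ?K"
    using x by (rule confusion_fibre_average_le_beta')
  also have "\<dots> < ?e"
  proof (cases "?b > 0")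
    case True
    have "?S / ?K \<le> ?PY / (pmf PV v * pmf (W x) y)"
      using ambiguous_count_le_output_pmf[OF PV, where v = v and W = W and x = x and y = y and l = l and q = q] pos by (simp add: field_simps)
    then have "?b * ?S / ?K \<le> ?b * ?PY / (pmf PV v * pmf (W x) y)"
      using True by (simp add: mult_left_mono times_divide_eq_right[symmetric] del: times_divide_eq_right)
    also have "\<dots> < ?e"
      using not_le not_threshold_imp_less[of "pmf (W x) y" "pmf PV v" ?PY n ?b \<gamma>] pos n
      by (simp add: threshold_event_def field_simps)
    finally show ?thesis .
  next
    case False
    then have "?b * ?S / ?K \<le> 0"
      using pos by (intro divide_nonpos_pos mult_nonpos_nonneg) (auto intro: sum_nonneg)
    then show ?thesis
      by (smt (verit) exp_gt_zero)
  qed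
  finally show ?thesis .
qed

lemma confusion_fibre_average_le_threshold:
  fixes F :: "('v::{finite,ab_group_add} list \<Rightarrow> 'u::{finite,ab_group_add} list) pmf"
    and W :: "'x list \<Rightarrow> 'y list pmf" and q :: "'v list \<Rightarrow> 'u list \<Rightarrow> 'x list"
  assumes F: "random_linear_code n l F" and n: "n \<ge> 1" and PV: "set_pmf PV \<subseteq> seqs n"
    and v: "v \<in> set_pmf PV" and x: "x \<in> q v ` seqs l" and y: "y \<in> set_pmf (W x)"
  shows "(\<Sum>u\<in>qinv l q v x. confusion_prob n l PV W F q v u y) / card (qinv l q v x) \<le>
    indicator (threshold_event n l PV W F q \<gamma>) (v, x, y) + exp (- real n * \<gamma>)"
proof (cases "(v, x, y) \<in> threshold_event n l PV W F q \<gamma>")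
  case True
  have "\<bar>(\<Sum>u\<in>qinv l q v x. confusion_prob n l PV W F q v u y) / card (qinv l q v x)\<bar> \<le> 1"
    by (intro abs_average_le) (auto simp: confusion_prob_def)
  then have "(\<Sum>u\<in>qinv l q v x. confusion_prob n l PV W F q v u y) / card (qinv l q v x) \<le> 1"
    by (rule order_trans[OF abs_ge_self])
  then show ?thesis
    using True by (simp add: add_increasing2)
next
  case False
  with F n PV v x y have "(\<Sum>u\<in>qinv l q v x. confusion_prob n l PV W F q v u y) / card (qinv l q v x) <
      exp (- real n * \<gamma>)"
    by (rule confusion_fibre_average_less_exp)
  with False show ?thesis
    by (simp add: less_imp_le)
qed

lemma integral_confusion_fibre_average_le:
  fixes F :: "('v::{finite,ab_group_add} list \<Rightarrow> 'u::{finite,ab_group_add} list) pmf"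
  assumes F: "random_linear_code n l F" and n: "n \<ge> 1" and PV: "set_pmf PV \<subseteq> seqs n"
  shows "measure_pmf.expectation (joint_VXY l PV W q)
      (\<lambda>(v, x, y). (\<Sum>u\<in>qinv l q v x. confusion_prob n l PV W F q v u y) / card (qinv l q v x)) \<le>
    measure_pmf.prob (joint_VXY l PV W q) (threshold_event n l PV W F q \<gamma>) + exp (- real n * \<gamma>)"
proof -
  let ?E = "threshold_event n l PV W F q \<gamma>" and ?e = "exp (- real n * \<gamma>)"
  have "measure_pmf.expectation (joint_VXY l PV W q)
      (\<lambda>(v, x, y). (\<Sum>u\<in>qinv l q v x. confusion_prob n l PV W F q v u y) / card (qinv l q v x)) \<le>
    measure_pmf.expectation (joint_VXY l PV W q) (\<lambda>z. indicator ?E z + ?e)"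
  proof (rule integral_mono_AE[OF _ _ AE_pmfI])
    fix z assume "z \<in> set_pmf (joint_VXY l PV W q)"
    then obtain v x y where "z = (v, x, y)" "v \<in> set_pmf PV" "x \<in> q v ` seqs l" "y \<in> set_pmf (W x)"
      by (auto simp: joint_VXY_def set_pmf_of_set)
    with confusion_fibre_average_le_threshold[OF F n PV] show
      "(\<lambda>(v, x, y). (\<Sum>u\<in>qinv l q v x. confusion_prob n l PV W F q v u y) / card (qinv l q v x)) z \<le>
        indicator ?E z + ?e"
      by simp
  qed (auto intro!: integrable_pmf_bounded[where B = "1 + ?e"] abs_average_le[THEN order_trans]
      simp: confusion_prob_def)
  also have "\<dots> = measure_pmf.prob (joint_VXY l PV W q) ?E + ?e"
    by (subst Bochner_Integration.integral_add) (auto intro: integrable_pmf_bounded[where B = 1])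
  finally show ?thesis .
qed

theorem lemma2:
  fixes n l m :: nat
    and PV :: "'v::{finite,ab_group_add} list pmf"
    and W :: "'x list \<Rightarrow> 'y list pmf"
    and F :: "('v list \<Rightarrow> 'u::{finite,ab_group_add} list) pmf"
    and q :: "'v list \<Rightarrow> 'u list \<Rightarrow> 'x list"
    and \<gamma> :: real
  assumes "n \<ge> 1" and "l \<ge> 1" and "m \<ge> 1"
    and "set_pmf PV \<subseteq> seqs n"
    and "\<And>x. x \<in> seqs m \<Longrightarrow> set_pmf (W x) \<subseteq> seqs m"
    and "random_linear_code n l F"
    and "\<And>v u. v \<in> seqs n \<Longrightarrow> u \<in> seqs l \<Longrightarrow> q v u \<in> seqs m"
    and "\<gamma> > 0"
  shows "avg_err n l PV W F q \<le>
     measure_pmf.prob (joint_VXY l PV W q)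
       {(v, x, y). ereal (1 / real n) * eln (pmf (W x) y / pmf (map_pmf (\<lambda>(v, x, y). y) (joint_VXY l PV W q)) y)
          \<le> ereal (1 / real n) * eln (1 / pmf PV v) + ereal (1 / real n) * eln (beta' n l F q v x) + ereal \<gamma>}
     + exp (- real n * \<gamma>)"
proof -
  note F = \<open>random_linear_code n l F\<close> and PV = \<open>set_pmf PV \<subseteq> seqs n\<close>
  have "avg_err n l PV W F q \<le>
      measure_pmf.expectation (joint_VUY l PV W q) (\<lambda>(v, u, y). confusion_prob n l PV W F q v u y)"
    by (rule avg_err_le_confusion_prob[OF F PV])
  also have "\<dots> = measure_pmf.expectation (joint_VXY l PV W q)
      (\<lambda>(v, x, y). (\<Sum>u\<in>qinv l q v x. confusion_prob n l PV W F q v u y) / card (qinv l q v x))"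
    by (subst integral_joint_VUY_eq_fibre_average[where B = 1]) (auto simp: confusion_prob_def)
  also have "\<dots> \<le> measure_pmf.prob (joint_VXY l PV W q) (threshold_event n l PV W F q \<gamma>) + exp (- real n * \<gamma>)"
    using F \<open>n \<ge> 1\<close> PV by (rule integral_confusion_fibre_average_le)
  finally show ?thesis
    unfolding threshold_event_def .
qed

end
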